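(* Let $q\in(0,1]$. Assume: [A5] there exists $\lambda>0$ with $\lim_{x\to0}p(x)/|x|^q=\lambda$; [A7] for every $M>0$, $\sup_{u,v\in\mathbb U_T,\ |u|,|v|<M,\ u\neq v}\frac{|\mathbb H_T(\theta^*+a_Tu)-\mathbb H_T(\theta^*+a_Tv)|}{|u-v|^q}\|G_T^{(00)}\|^q\to0$ in probability as $T\to\infty$. If $\hat u_T=a_T^{-1}(\hat\theta_T-\theta^* )=O_p(1)$ as $T\to\infty$, then $$P\bigl(\hat\theta_T^{(0)}=0\bigr)\to1\quad\text{as }T\to\infty.$$
   Context: Let $\Theta\subset\mathbb R^{\mathsf p}$ be a bounded open set with closure $\overline\Theta$ and $\theta^*\in\Theta$. Let $(\Omega,\mathcal F,P)$ be a probability space, $\mathbb T\subset\mathbb R_{\ge0}$ with $\sup\mathbb T=\infty$; limits $T\to\infty$ are along $\mathbb T$. For each $T\in\mathbb T$, $\mathbb H_T:\Omega\times\overline\Theta\to\mathbb R$ is a random field continuous in $\theta$ for every $\omega$. The penalty is $p_T(\theta)=\sum_{j=1}^{\mathsf p}\xi_T^jp(\theta_j)$ with (possibly random) $\xi_T^j>0$ and $p:\mathbb R\to\mathbb R_{\ge0}$, $p(0)=0$; $\mathbb H^\dagger_T=\mathbb H_T-p_T$, and $\hat\theta_T:\Omega\to\overline\Theta$ is measurable with $\mathbb H^\dagger_T(\hat\theta_T)=\max_{\theta\in\overline\Theta}\mathbb H^\dagger_T(\theta)$. $\mathcal J^{(0)}=\{j:\theta^*_j=0\}$, $\mathcal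 J^{(1)}=\{j:\theta^*_j\ne0\}$; for $x\in\mathbb R^{\mathsf p}$, $x^{(0)}=(x_j)_{j\in\mathcal J^{(0)}}$, and for a matrix $A$, $A^{(00)}=(A_{ij})_{i,j\in\mathcal J^{(0)}}$. $a_T=\mathrm{diag}(\alpha_T^1,\dots,\alpha_T^{\mathsf p})$ is deterministic, invertible, with $\|a_T\|\to0$ ($\|\cdot\|$ the spectral norm). $\mathbb U_T=\{u:\theta^*+a_Tu\in\overline\Theta\}$. $\tilde a_T$ is diagonal with $(\tilde a_T)_{jj}=(\xi_T^j)^{-1/q}$ for $j\in\mathcal J^{(0)}$ and $\alpha_T^j$ for $j\in\mathcal J^{(1)}$; $G_T=a_T^{-1}\tilde a_T$. $X_T=O_p(1)$ means: for every $\epsilon>0$ there exist $\mathcal T\in\mathbb T$, $M>0$ with $P(|X_T|>M)<\epsilon$ for all $T\ge\mathcal T$. *)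

theory Defs
  imports "HOL-Analysis.Analysis" "HOL-Probability.Probability"
begin

definition along :: "real set \<Rightarrow> real filter" where
  "along TT = inf at_top (principal TT)"

definition diag_mat :: "('n::finite \<Rightarrow> real) \<Rightarrow> real^'n^'n" where
  "diag_mat d = (\<chi> i j. if i = j then d i else 0)"

definition spec_norm :: "real^'n::finite^'m::finite \<Rightarrow> real" where
  "spec_norm A = onorm (\<lambda>x. A *v x)"

text \<open>The (00)-block of a square matrix, indices in J0 = {j. \<theta>*_j = 0}; realised as the
  matrix with all entries outside J0 x J0 set to 0 (this has the same spectral norm
  as the submatrix).\<close>
definition block00 :: "real^'n::finite \<Rightarrow> real^'n^'n \<Rightarrow> real^'n^'n" where
  "block00 \<theta>s A = (\<chi> i j. if \<theta>s$i = 0 \<and> \<theta>s$j = 0 then A$i$j else 0)"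

definition a_mat :: "(real \<Rightarrow> 'n::finite \<Rightarrow> real) \<Rightarrow> real \<Rightarrow> real^'n^'n" where
  "a_mat \<alpha> T = diag_mat (\<alpha> T)"

definition atilde_mat :: "real \<Rightarrow> real^'n::finite \<Rightarrow> (real \<Rightarrow> 'n \<Rightarrow> real) \<Rightarrow>
     (real \<Rightarrow> 'a \<Rightarrow> 'n \<Rightarrow> real) \<Rightarrow> real \<Rightarrow> 'a \<Rightarrow> real^'n^'n" where
  "atilde_mat q \<theta>s \<alpha> \<xi> T \<omega> =
     diag_mat (\<lambda>j. if \<theta>s$j = 0 then (\<xi> T \<omega> j) powr (-1/q) else \<alpha> T j)"

definition G_mat :: "real \<Rightarrow> real^'n::finite \<Rightarrow> (real \<Rightarrow> 'n \<Rightarrow> real) \<Rightarrow>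
     (real \<Rightarrow> 'a \<Rightarrow> 'n \<Rightarrow> real) \<Rightarrow> real \<Rightarrow> 'a \<Rightarrow> real^'n^'n" where
  "G_mat q \<theta>s \<alpha> \<xi> T \<omega> = matrix_inv (a_mat \<alpha> T) ** atilde_mat q \<theta>s \<alpha> \<xi> T \<omega>"

definition U_set :: "(real^'n::finite) set \<Rightarrow> real^'n \<Rightarrow> (real \<Rightarrow> 'n \<Rightarrow> real) \<Rightarrow> real \<Rightarrow> (real^'n) set" where
  "U_set \<Theta> \<theta>s \<alpha> T = {u. \<theta>s + a_mat \<alpha> T *v u \<in> closure \<Theta>}"

definition Hdag :: "(real \<Rightarrow> 'a \<Rightarrow> real^'n::finite \<Rightarrow> real) \<Rightarrow> (real \<Rightarrow> 'a \<Rightarrow> 'n \<Rightarrow> real) \<Rightarrow>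
     (real \<Rightarrow> real) \<Rightarrow> real \<Rightarrow> 'a \<Rightarrow> real^'n \<Rightarrow> real" where
  "Hdag H \<xi> p T \<omega> \<theta> = H T \<omega> \<theta> - (\<Sum>j\<in>UNIV. \<xi> T \<omega> j * p (\<theta>$j))"

end

theory Submission
  imports Defs
begin

(* Let J0 be the zero set of theta_star, n the dimension and lambda the limit in [A5]. On the event
   where the rescaled estimator u_T = a_T^-1 (theta_hat - theta_star) is bounded and the supremum of
   [A7] is at most lambda / (2 n^q), theta_hat vanishes on J0 for a deterministic reason. Setting
   the J0-coordinates of theta_hat to 0 gives a competitor theta~ close to theta_star, hence in Theta,
   and optimality of theta_hat makes H_T(theta_hat) - H_T(theta~) at least the saved penalty
   xi_m p(theta_hat_m) > (lambda/2) xi_m |theta_hat_m|^q, where m is the J0-coordinate maximising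
   |theta_hat_j / alpha_j|. On the other hand |u - u~| <= n |theta_hat_m / alpha_m| and
   ||G^(00)||^q >= 1 / (|alpha_m|^q xi_m), so the Hoelder bound of [A7] caps the same difference
   by (lambda/2) xi_m |theta_hat_m|^q. The complementary event has small probability because
   u_T = O_p(1) and by [A7]. Boundedness of Theta, q <= 1 and the conditions on the index set
   are not needed. *)

lemma diag_mat_mult: "diag_mat a ** diag_mat b = diag_mat (\<lambda>j. a j * b j)"
  by (simp add: diag_mat_def matrix_matrix_mult_def vec_eq_iff if_distrib[of "\<lambda>x. x * _"] sum.delta
      cong: if_cong)

lemma diag_mat_one: "diag_mat (\<lambda>_. 1) = mat 1"
  by (simp add: diag_mat_def mat_def)

lemma matrix_vector_mult_diag_mat: "diag_mat d *v x = (\<chi> j. d j * x$j)"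
  by (simp add: diag_mat_def matrix_vector_mult_def vec_eq_iff if_distrib[of "\<lambda>x. x * _"] sum.delta
      cong: if_cong)

lemma matrix_inv_diag_mat:
  assumes "\<And>j. d j \<noteq> 0"
  shows "matrix_inv (diag_mat d) = diag_mat (\<lambda>j. 1 / d j)"
proof -
  let ?D = "diag_mat (\<lambda>j. 1 / d j)"
  have inverse: "diag_mat d ** ?D = mat 1 \<and> ?D ** diag_mat d = mat 1"
    using assms by (simp add: diag_mat_mult flip: diag_mat_one)
  define B where "B = matrix_inv (diag_mat d)"
  have B: "diag_mat d ** B = mat 1 \<and> B ** diag_mat d = mat 1"
    unfolding B_def matrix_inv_def by (rule someI[of _ ?D]) (rule inverse)
  have "B = B ** (diag_mat d ** ?D)"
    using inverse by (simp add: matrix_mul_rid)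
  also have "\<dots> = ?D"
    using B by (simp add: matrix_mul_assoc matrix_mul_lid)
  finally show ?thesis
    unfolding B_def .
qed

lemma block00_diag_mat: "block00 \<theta>s (diag_mat d) = diag_mat (\<lambda>j. if \<theta>s$j = 0 then d j else 0)"
  by (simp add: block00_def diag_mat_def vec_eq_iff)

lemma norm_matrix_vector_mult_le: "norm (A *v x) \<le> spec_norm A * norm x"
  unfolding spec_norm_def by (rule onorm[OF matrix_vector_mul_bounded_linear])

lemma abs_le_spec_norm_diag_mat: "\<bar>d j\<bar> \<le> spec_norm (diag_mat d)"
proof -
  have "diag_mat d *v axis j 1 = d j *\<^sub>R axis j (1::real)"
    by (simp add: matrix_vector_mult_diag_mat axis_def vec_eq_iff)
  then show ?thesis
    using norm_matrix_vector_mult_le[of "diag_mat d" "axis j 1"] by simp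
qed

lemma spec_norm_diag_mat: "spec_norm (diag_mat d) = Max (range (\<lambda>j. \<bar>d j\<bar>))"
proof (rule antisym)
  let ?m = "Max (range (\<lambda>j. \<bar>d j\<bar>))"
  have m: "\<bar>d j\<bar> \<le> ?m" for j
    by (rule Max_ge) auto
  have m_nonneg: "0 \<le> ?m"
    using m[of undefined] abs_ge_zero order_trans by blast
  show "spec_norm (diag_mat d) \<le> ?m"
    unfolding spec_norm_def
  proof (rule onorm_le)
    fix x :: "real^'a"
    have "(norm (diag_mat d *v x))\<^sup>2 = (\<Sum>j\<in>UNIV. (d j)\<^sup>2 * (x$j)\<^sup>2)"
      by (simp add: matrix_vector_mult_diag_mat norm_vec_def L2_set_def sum_nonneg power_mult_distrib)
    also have "\<dots> \<le> (\<Sum>j\<in>UNIV. ?m\<^sup>2 * (x$j)\<^sup>2)"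
    proof (intro sum_mono mult_right_mono)
      show "(d j)\<^sup>2 \<le> ?m\<^sup>2" for j
        using m m_nonneg by (simp add: power2_le_iff_abs_le)
    qed simp
    also have "\<dots> = (?m * norm x)\<^sup>2"
      by (simp add: norm_vec_def L2_set_def power_mult_distrib sum_distrib_left sum_nonneg)
    finally show "norm (diag_mat d *v x) \<le> ?m * norm x"
      using m_nonneg by (simp add: power2_le_iff_abs_le)
  qed
  show "?m \<le> spec_norm (diag_mat d)"
    using abs_le_spec_norm_diag_mat by (intro Max.boundedI) auto
qed

definition restrict_to_support :: "real^'n::finite \<Rightarrow> real^'n \<Rightarrow> real^'n" where
  "restrict_to_support \<theta>s \<theta> = (\<chi> j. if \<theta>s$j = 0 then 0 else \<theta>$j)"

lemma norm_restrict_to_support_diff_le: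
  "norm (restrict_to_support \<theta>s \<theta> - \<theta>s) \<le> norm (\<theta> - \<theta>s)"
  by (rule norm_le_componentwise_cart) (simp add: restrict_to_support_def)

lemma norm_le_card_mult_abs_component:
  fixes x :: "real^'n::finite"
  assumes "\<And>j. \<bar>x$j\<bar> \<le> \<bar>x$m\<bar>"
  shows "norm x \<le> real CARD('n) * \<bar>x$m\<bar>"
  using norm_le_l1_cart[of x] sum_bounded_above[of UNIV "\<lambda>j. \<bar>x$j\<bar>", OF assms] by simp

lemma penalised_argmax_vanishes_on_zeros:
  fixes \<theta>s \<theta>h :: "real^'n::finite" and \<alpha> \<xi> :: "'n \<Rightarrow> real"
    and Hf :: "real^'n \<Rightarrow> real" and p :: "real \<Rightarrow> real"
  assumes \<theta>t_def: "\<theta>t = restrict_to_support \<theta>s \<theta>h"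
    and \<alpha>: "\<And>j. \<alpha> j \<noteq> 0" and \<xi>: "\<And>j. \<xi> j > 0" and q: "q > 0" and \<kappa>: "\<kappa> > 0"
    and p_nonneg: "\<And>x. p x \<ge> 0" and p0: "p 0 = 0"
    and max: "Hf \<theta>t - (\<Sum>j\<in>UNIV. \<xi> j * p (\<theta>t$j)) \<le> Hf \<theta>h - (\<Sum>j\<in>UNIV. \<xi> j * p (\<theta>h$j))"
    and p_lower: "\<And>j. \<theta>s$j = 0 \<Longrightarrow> \<theta>h$j \<noteq> 0 \<Longrightarrow> \<kappa> * \<bar>\<theta>h$j\<bar> powr q < p (\<theta>h$j)"
    and C: "\<And>j. \<theta>s$j = 0 \<Longrightarrow> 1 / (\<bar>\<alpha> j\<bar> powr q * \<xi> j) \<le> C"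
    and hoelder: "\<theta>t \<noteq> \<theta>h \<Longrightarrow>
      \<bar>Hf \<theta>h - Hf \<theta>t\<bar> * C \<le> \<kappa> / real CARD('n) powr q * norm (\<chi> j. (\<theta>h$j - \<theta>t$j) / \<alpha> j) powr q"
    and j: "\<theta>s$j = 0"
  shows "\<theta>h$j = 0"
proof (rule ccontr)
  assume "\<theta>h$j \<noteq> 0"
  define w where "w = (\<chi> j. (\<theta>h$j - \<theta>t$j) / \<alpha> j)"
  have "Max (range (\<lambda>i. \<bar>w$i\<bar>)) \<in> range (\<lambda>i. \<bar>w$i\<bar>)"
    by (rule Max_in) auto
  then obtain m where "\<bar>w$m\<bar> = Max (range (\<lambda>i. \<bar>w$i\<bar>))"
    by (metis rangeE)
  then have m: "\<bar>w$i\<bar> \<le> \<bar>w$m\<bar>" for i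
    by simp
  have "w$j \<noteq> 0"
    using \<open>\<theta>h$j \<noteq> 0\<close> j \<alpha>[of j] by (simp add: w_def \<theta>t_def restrict_to_support_def)
  then have "w$m \<noteq> 0"
    using m[of j] by auto
  then have \<theta>s_m: "\<theta>s$m = 0" and \<theta>t_m: "\<theta>t$m = 0" and w_m: "w$m = \<theta>h$m / \<alpha> m"
    by (auto simp: w_def \<theta>t_def restrict_to_support_def split: if_splits)
  have \<theta>h_m: "\<theta>h$m \<noteq> 0"
    using \<open>w$m \<noteq> 0\<close> w_m by auto
  have "\<theta>t \<noteq> \<theta>h"
    using \<theta>t_m \<theta>h_m by auto
  have "0 < 1 / (\<bar>\<alpha> m\<bar> powr q * \<xi> m)"
    using \<alpha>[of m] \<xi>[of m] by simp
  then have C_pos: "C > 0"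
    using C[OF \<theta>s_m] by linarith
  have "\<xi> m * p (\<theta>h$m) = \<xi> m * p (\<theta>h$m) - \<xi> m * p (\<theta>t$m)"
    using \<theta>t_m p0 by simp
  also have "\<dots> \<le> (\<Sum>i\<in>UNIV. \<xi> i * p (\<theta>h$i) - \<xi> i * p (\<theta>t$i))"
  proof (rule member_le_sum)
    show "0 \<le> \<xi> i * p (\<theta>h$i) - \<xi> i * p (\<theta>t$i)" for i
      using p_nonneg[of "\<theta>h$i"] \<xi>[of i] by (simp add: \<theta>t_def restrict_to_support_def p0)
  qed auto
  also have "\<dots> \<le> \<bar>Hf \<theta>h - Hf \<theta>t\<bar>"
    using max by (simp add: sum_subtractf)
  finally have penalty: "\<xi> m * p (\<theta>h$m) \<le> \<bar>Hf \<theta>h - Hf \<theta>t\<bar>" .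
  have "\<kappa> * \<bar>w$m\<bar> powr q = \<kappa> * \<bar>\<theta>h$m\<bar> powr q * \<xi> m * (1 / (\<bar>\<alpha> m\<bar> powr q * \<xi> m))"
    using \<xi>[of m] by (simp add: w_m abs_divide powr_divide)
  also have "\<dots> \<le> \<kappa> * \<bar>\<theta>h$m\<bar> powr q * \<xi> m * C"
    using C[OF \<theta>s_m] \<kappa> \<xi>[of m] by (intro mult_left_mono) auto
  also have "\<dots> < \<xi> m * p (\<theta>h$m) * C"
    using p_lower[OF \<theta>s_m \<theta>h_m] \<xi>[of m] C_pos by (simp add: mult.commute)
  also have "\<dots> \<le> \<bar>Hf \<theta>h - Hf \<theta>t\<bar> * C"
    using penalty C_pos by (simp add: mult_right_mono)
  also have "\<dots> \<le> \<kappa> / real CARD('n) powr q * norm w powr q"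
    using hoelder[OF \<open>\<theta>t \<noteq> \<theta>h\<close>] by (simp add: w_def)
  also have "\<dots> \<le> \<kappa> / real CARD('n) powr q * (real CARD('n) * \<bar>w$m\<bar>) powr q"
    using norm_le_card_mult_abs_component[OF m] q \<kappa> by (intro mult_left_mono powr_mono2) auto
  also have "\<dots> = \<kappa> * \<bar>w$m\<bar> powr q"
    by (simp add: powr_mult)
  finally show False
    by simp
qed

lemma matrix_inv_a_mat_mult:
  assumes "\<And>j. \<alpha> T j \<noteq> 0"
  shows "matrix_inv (a_mat \<alpha> T) *v x = (\<chi> j. x$j / \<alpha> T j)"
  using assms by (simp add: a_mat_def matrix_inv_diag_mat matrix_vector_mult_diag_mat)

lemma block00_G_mat:
  assumes "\<And>j. \<alpha> T j \<noteq> 0"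
  shows "block00 \<theta>s (G_mat q \<theta>s \<alpha> \<xi> T \<omega>) =
    diag_mat (\<lambda>j. if \<theta>s$j = 0 then 1 / \<alpha> T j * \<xi> T \<omega> j powr (-1/q) else 0)"
  unfolding G_mat_def a_mat_def atilde_mat_def matrix_inv_diag_mat[OF assms] diag_mat_mult block00_diag_mat
  by (rule arg_cong[where f = diag_mat]) auto

lemma inverse_le_spec_norm_block00_G_mat_powr:
  assumes \<alpha>: "\<And>j. \<alpha> T j \<noteq> 0" and \<xi>: "\<xi> T \<omega> j > 0" and q: "q > 0" and j: "\<theta>s$j = 0"
  shows "1 / (\<bar>\<alpha> T j\<bar> powr q * \<xi> T \<omega> j) \<le> spec_norm (block00 \<theta>s (G_mat q \<theta>s \<alpha> \<xi> T \<omega>)) powr q"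
proof -
  let ?g = "\<bar>1 / \<alpha> T j * \<xi> T \<omega> j powr (-1/q)\<bar>"
  have "?g \<le> spec_norm (block00 \<theta>s (G_mat q \<theta>s \<alpha> \<xi> T \<omega>))"
    using abs_le_spec_norm_diag_mat[of "\<lambda>j. if \<theta>s$j = 0 then 1 / \<alpha> T j * \<xi> T \<omega> j powr (-1/q) else 0" j] j
    by (simp add: block00_G_mat[of \<alpha> T, OF \<alpha>])
  then have "?g powr q \<le> spec_norm (block00 \<theta>s (G_mat q \<theta>s \<alpha> \<xi> T \<omega>)) powr q"
    using q by (intro powr_mono2) auto
  moreover have "?g powr q = (\<xi> T \<omega> j powr (-1/q)) powr q / \<bar>\<alpha> T j\<bar> powr q"
    by (simp add: abs_mult powr_divide)
  moreover have "(\<xi> T \<omega> j powr (-1/q)) powr q = 1 / \<xi> T \<omega> j"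
    using \<xi> q by (simp only: powr_powr) simp
  ultimately show ?thesis
    by (simp add: mult.commute)
qed

definition hoelder_sup ::
    "(real^'n::finite) set \<Rightarrow> real^'n \<Rightarrow> (real \<Rightarrow> 'n \<Rightarrow> real) \<Rightarrow> (real \<Rightarrow> 'a \<Rightarrow> 'n \<Rightarrow> real) \<Rightarrow>
     real \<Rightarrow> (real \<Rightarrow> 'a \<Rightarrow> real^'n \<Rightarrow> real) \<Rightarrow> real \<Rightarrow> real \<Rightarrow> 'a \<Rightarrow> ereal" where
  "hoelder_sup \<Theta> \<theta>s \<alpha> \<xi> q H Mb T \<omega> =
    (SUP uv \<in> {(u, v). u \<in> U_set \<Theta> \<theta>s \<alpha> T \<and> v \<in> U_set \<Theta> \<theta>s \<alpha> T \<and>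
                      norm u < Mb \<and> norm v < Mb \<and> u \<noteq> v}.
       ereal (\<bar>H T \<omega> (\<theta>s + a_mat \<alpha> T *v fst uv) - H T \<omega> (\<theta>s + a_mat \<alpha> T *v snd uv)\<bar>
              / norm (fst uv - snd uv) powr q
              * spec_norm (block00 \<theta>s (G_mat q \<theta>s \<alpha> \<xi> T \<omega>)) powr q))"

lemma hoelder_sup_leD:
  assumes "hoelder_sup \<Theta> \<theta>s \<alpha> \<xi> q H Mb T \<omega> \<le> ereal \<epsilon>"
    and "\<theta>s + a_mat \<alpha> T *v u \<in> closure \<Theta>" "\<theta>s + a_mat \<alpha> T *v v \<in> closure \<Theta>"
    and "norm u < Mb" "norm v < Mb" "u \<noteq> v"
  shows "\<bar>H T \<omega> (\<theta>s + a_mat \<alpha> T *v u) - H T \<omega> (\<theta>s + a_mat \<alpha> T *v v)\<bar>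
    * spec_norm (block00 \<theta>s (G_mat q \<theta>s \<alpha> \<xi> T \<omega>)) powr q \<le> \<epsilon> * norm (u - v) powr q"
  using assms unfolding hoelder_sup_def U_set_def SUP_le_iff
  by (auto simp: divide_le_eq mult.commute mult.left_commute)

lemma penalised_estimator_vanishes_on_zeros:
  fixes \<theta>s \<theta>h :: "real^'n::finite"
  assumes \<alpha>: "\<And>j. \<alpha> T j \<noteq> 0" and \<xi>: "\<And>j. \<xi> T \<omega> j > 0" and q: "q > 0" and \<kappa>: "\<kappa> > 0"
    and p_nonneg: "\<And>x. p x \<ge> 0" and p0: "p 0 = 0"
    and p_lower: "\<And>x. x \<noteq> 0 \<Longrightarrow> \<bar>x\<bar> < \<delta> \<Longrightarrow> \<kappa> * \<bar>x\<bar> powr q < p x"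
    and ball: "ball \<theta>s r \<subseteq> \<Theta>"
    and \<theta>h: "\<theta>h \<in> closure \<Theta>"
    and max: "\<And>\<theta>. \<theta> \<in> closure \<Theta> \<Longrightarrow> Hdag H \<xi> p T \<omega> \<theta> \<le> Hdag H \<xi> p T \<omega> \<theta>h"
    and u_bound: "norm (matrix_inv (a_mat \<alpha> T) *v (\<theta>h - \<theta>s)) < Mb"
    and a_small: "spec_norm (a_mat \<alpha> T) * Mb < min r \<delta>"
    and sup: "hoelder_sup \<Theta> \<theta>s \<alpha> \<xi> q H Mb T \<omega> \<le> ereal (\<kappa> / real CARD('n) powr q)"
    and j: "\<theta>s$j = 0"
  shows "\<theta>h$j = 0"
proof -
  note a_inv = matrix_inv_a_mat_mult[of \<alpha> T, OF \<alpha>]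
  define \<theta>t where "\<theta>t = restrict_to_support \<theta>s \<theta>h"
  define u where "u = matrix_inv (a_mat \<alpha> T) *v (\<theta>h - \<theta>s)"
  define v where "v = matrix_inv (a_mat \<alpha> T) *v (\<theta>t - \<theta>s)"
  have u_inv: "\<theta>s + a_mat \<alpha> T *v u = \<theta>h" and v_inv: "\<theta>s + a_mat \<alpha> T *v v = \<theta>t"
    using \<alpha> by (simp_all add: u_def v_def a_inv) (simp_all add: a_mat_def matrix_vector_mult_diag_mat vec_eq_iff)
  have "norm (\<theta>h - \<theta>s) = norm (a_mat \<alpha> T *v u)"
    using u_inv by auto
  also have "\<dots> \<le> spec_norm (a_mat \<alpha> T) * norm u"
    by (rule norm_matrix_vector_mult_le)
  also have "\<dots> \<le> spec_norm (a_mat \<alpha> T) * Mb"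
    using u_bound by (simp add: u_def mult_left_mono spec_norm_def onorm_pos_le matrix_vector_mul_bounded_linear)
  finally have close: "norm (\<theta>h - \<theta>s) < min r \<delta>"
    using a_small by linarith
  then have "\<theta>t \<in> \<Theta>"
    using ball norm_restrict_to_support_diff_le[of \<theta>s \<theta>h]
    by (auto simp: \<theta>t_def dist_norm norm_minus_commute)
  then have \<theta>t: "\<theta>t \<in> closure \<Theta>"
    using closure_subset by blast
  have "norm v \<le> norm u"
    by (intro norm_le_componentwise_cart) (simp add: u_def v_def \<theta>t_def restrict_to_support_def a_inv)
  then have norm_v: "norm v < Mb"
    using u_bound by (simp add: u_def)
  show ?thesis
  proof (rule penalised_argmax_vanishes_on_zeros[where \<alpha> = "\<alpha> T" and \<xi> = "\<xi> T \<omega>" and Hf = "H T \<omega>"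
        and p = p and q = q, OF \<theta>t_def \<alpha> \<xi> q \<kappa> p_nonneg p0 _ _ _ _ j])
    show "H T \<omega> \<theta>t - (\<Sum>j\<in>UNIV. \<xi> T \<omega> j * p (\<theta>t$j)) \<le> H T \<omega> \<theta>h - (\<Sum>j\<in>UNIV. \<xi> T \<omega> j * p (\<theta>h$j))"
      using max[OF \<theta>t] by (simp add: Hdag_def)
    show "\<kappa> * \<bar>\<theta>h$i\<bar> powr q < p (\<theta>h$i)" if "\<theta>s$i = 0" "\<theta>h$i \<noteq> 0" for i
      using p_lower[OF that(2)] component_le_norm_cart[of "\<theta>h - \<theta>s" i] close that(1) by simp
    show "1 / (\<bar>\<alpha> T i\<bar> powr q * \<xi> T \<omega> i) \<le> spec_norm (block00 \<theta>s (G_mat q \<theta>s \<alpha> \<xi> T \<omega>)) powr q"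
      if "\<theta>s$i = 0" for i
      by (rule inverse_le_spec_norm_block00_G_mat_powr) (use \<alpha> \<xi> q that in auto)
    assume "\<theta>t \<noteq> \<theta>h"
    then have "u \<noteq> v"
      using u_inv v_inv by auto
    have "u - v = (\<chi> j. (\<theta>h$j - \<theta>t$j) / \<alpha> T j)"
      by (simp add: u_def v_def a_inv vec_eq_iff diff_divide_distrib)
    then show "\<bar>H T \<omega> \<theta>h - H T \<omega> \<theta>t\<bar> * spec_norm (block00 \<theta>s (G_mat q \<theta>s \<alpha> \<xi> T \<omega>)) powr q
        \<le> \<kappa> / real CARD('n) powr q * norm (\<chi> j. (\<theta>h$j - \<theta>t$j) / \<alpha> T j) powr q"
      using hoelder_sup_leD[OF sup, of u v] u_inv v_inv \<theta>h \<theta>t u_bound norm_v \<open>u \<noteq> v\<close>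
      by (simp add: u_def)
  qed
qed

lemma eventually_nonzero_on_zeros_subset:
  fixes \<theta>s :: "real^'n::finite" and \<theta>hat :: "real \<Rightarrow> 'a \<Rightarrow> real^'n"
  assumes \<alpha>: "\<And>T j. \<alpha> T j \<noteq> 0" and \<xi>: "\<And>T \<omega> j. \<xi> T \<omega> j > 0" and q: "q > 0" and \<kappa>: "\<kappa> > 0"
    and p_nonneg: "\<And>x. p x \<ge> 0" and p0: "p 0 = 0"
    and "\<delta> > 0" and p_lower: "\<And>x. x \<noteq> 0 \<Longrightarrow> \<bar>x\<bar> < \<delta> \<Longrightarrow> \<kappa> * \<bar>x\<bar> powr q < p x"
    and "r > 0" and ball: "ball \<theta>s r \<subseteq> \<Theta>"
    and \<theta>hat_in: "\<And>T \<omega>. \<theta>hat T \<omega> \<in> closure \<Theta>"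
    and \<theta>hat_max: "\<And>T \<omega> \<theta>. \<theta> \<in> closure \<Theta> \<Longrightarrow> Hdag H \<xi> p T \<omega> \<theta> \<le> Hdag H \<xi> p T \<omega> (\<theta>hat T \<omega>)"
    and a_lim: "((\<lambda>T. spec_norm (a_mat \<alpha> T)) \<longlongrightarrow> 0) F"
    and "Mb > 0"
  shows "eventually (\<lambda>T. {\<omega>. \<exists>j. \<theta>s$j = 0 \<and> \<theta>hat T \<omega> $ j \<noteq> 0} \<subseteq>
      {\<omega>. norm (matrix_inv (a_mat \<alpha> T) *v (\<theta>hat T \<omega> - \<theta>s)) > Mb} \<union>
      {\<omega>. hoelder_sup \<Theta> \<theta>s \<alpha> \<xi> q H (Mb + 1) T \<omega> > ereal (\<kappa> / real CARD('n) powr q)}) F"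
proof -
  have "eventually (\<lambda>T. spec_norm (a_mat \<alpha> T) * (Mb + 1) < min r \<delta>) F"
    using order_tendstoD(2)[OF a_lim, of "min r \<delta> / (Mb + 1)"] \<open>r > 0\<close> \<open>\<delta> > 0\<close> \<open>Mb > 0\<close>
    by (simp add: pos_less_divide_eq)
  then show ?thesis
  proof eventually_elim
    case (elim T)
    show ?case
    proof (rule subsetI, rule ccontr)
      fix \<omega> assume "\<omega> \<in> {\<omega>. \<exists>j. \<theta>s$j = 0 \<and> \<theta>hat T \<omega> $ j \<noteq> 0}"
        and "\<omega> \<notin> {\<omega>. norm (matrix_inv (a_mat \<alpha> T) *v (\<theta>hat T \<omega> - \<theta>s)) > Mb} \<union>
          {\<omega>. hoelder_sup \<Theta> \<theta>s \<alpha> \<xi> q H (Mb + 1) T \<omega> > ereal (\<kappa> / real CARD('n) powr q)}"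
      then obtain j where j: "\<theta>s$j = 0" "\<theta>hat T \<omega> $ j \<noteq> 0"
        and u_small: "norm (matrix_inv (a_mat \<alpha> T) *v (\<theta>hat T \<omega> - \<theta>s)) < Mb + 1"
        and sup_small: "hoelder_sup \<Theta> \<theta>s \<alpha> \<xi> q H (Mb + 1) T \<omega> \<le> ereal (\<kappa> / real CARD('n) powr q)"
        by (auto simp: not_less)
      have "\<theta>hat T \<omega> $ j = 0"
        by (rule penalised_estimator_vanishes_on_zeros[where H = H and \<xi> = \<xi> and p = p and \<delta> = \<delta>
              and r = r and \<theta>h = "\<theta>hat T \<omega>" and \<kappa> = \<kappa> and Mb = "Mb + 1"])
          (use \<alpha> \<xi> q \<kappa> p_nonneg p0 p_lower ball \<theta>hat_in \<theta>hat_max elim j(1) u_small sup_small in simp_all)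
      with j(2) show False
        by contradiction
    qed
  qed
qed

lemma borel_measurable_SUP_continuous_on:
  fixes X :: "('b::{metric_space,second_countable_topology}) set" and f :: "'a \<Rightarrow> 'b \<Rightarrow> real"
  assumes cont: "\<And>\<omega>. continuous_on X (f \<omega>)"
    and meas: "\<And>x. x \<in> X \<Longrightarrow> (\<lambda>\<omega>. f \<omega> x) \<in> borel_measurable M"
  shows "(\<lambda>\<omega>. SUP x\<in>X. ereal (f \<omega> x)) \<in> borel_measurable M"
proof -
  obtain D where D: "countable D" "D \<subseteq> X" "X \<subseteq> closure D"
    by (rule separable)
  have "(SUP x\<in>X. ereal (f \<omega> x)) = (SUP x\<in>D. ereal (f \<omega> x))" for \<omega>
  proof (rule antisym)
    show "(SUP x\<in>X. ereal (f \<omega> x)) \<le> (SUP x\<in>D. ereal (f \<omega> x))"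
    proof (rule SUP_least)
      fix x assume "x \<in> X"
      then have "x \<in> closure D"
        using D(3) by blast
      then obtain s where s: "\<And>n. s n \<in> D" "s \<longlonglongrightarrow> x"
        unfolding closure_sequential by blast
      have "(\<lambda>n. ereal (f \<omega> (s n))) \<longlonglongrightarrow> ereal (f \<omega> x)"
        using cont[of \<omega>] \<open>x \<in> X\<close> s D(2) unfolding continuous_on_sequentially
        by (intro tendsto_ereal) (auto simp: o_def)
      then show "ereal (f \<omega> x) \<le> (SUP x\<in>D. ereal (f \<omega> x))"
        by (rule LIMSEQ_le_const2) (intro exI allI impI SUP_upper s(1))
    qed
  qed (use D(2) in \<open>rule SUP_subset_mono, simp\<close>)
  then show ?thesis
    using D meas by (simp add: subset_eq)
qed

lemma borel_measurable_norm_matrix_vector_mult_diff: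
  fixes A :: "real^'n::finite^'m::finite"
  assumes "f \<in> borel_measurable M"
  shows "(\<lambda>\<omega>. norm (A *v (f \<omega> - c))) \<in> borel_measurable M"
  by (intro borel_measurable_continuous_on[OF _ assms] continuous_intros
      continuous_on_compose2[OF matrix_vector_mult_linear_continuous_on]) auto

lemma borel_measurable_hoelder_sup:
  assumes H_cont: "\<And>\<omega>. continuous_on (closure \<Theta>) (H T \<omega>)"
    and H_meas: "\<And>\<theta>. \<theta> \<in> closure \<Theta> \<Longrightarrow> (\<lambda>\<omega>. H T \<omega> \<theta>) \<in> borel_measurable M"
    and \<xi>_meas: "\<And>j. (\<lambda>\<omega>. \<xi> T \<omega> j) \<in> borel_measurable M"
    and \<alpha>: "\<And>j. \<alpha> T j \<noteq> 0"
  shows "(\<lambda>\<omega>. hoelder_sup \<Theta> \<theta>s \<alpha> \<xi> q H Mb T \<omega>) \<in> borel_measurable M"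
proof -
  define X where "X = {(u, v). u \<in> U_set \<Theta> \<theta>s \<alpha> T \<and> v \<in> U_set \<Theta> \<theta>s \<alpha> T \<and>
                               norm u < Mb \<and> norm v < Mb \<and> u \<noteq> v}"
  define c where "c \<omega> = spec_norm (block00 \<theta>s (G_mat q \<theta>s \<alpha> \<xi> T \<omega>))" for \<omega>
  define a where "a uv = \<theta>s + a_mat \<alpha> T *v uv" for uv
  have X: "a (fst uv) \<in> closure \<Theta>" "a (snd uv) \<in> closure \<Theta>" "fst uv \<noteq> snd uv" if "uv \<in> X" for uv
    using that by (auto simp: X_def U_set_def a_def)
  have c_meas [measurable]: "c \<in> borel_measurable M"
    using \<xi>_meas unfolding c_def block00_G_mat[of \<alpha> T, OF \<alpha>] spec_norm_diag_mat by measurable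
  have a_cont: "continuous_on X (\<lambda>uv. a (f uv))" if "continuous_on X f" for f
    unfolding a_def
    by (intro continuous_intros continuous_on_compose2[OF matrix_vector_mult_linear_continuous_on that]) auto
  have "(\<lambda>\<omega>. SUP uv\<in>X. ereal (\<bar>H T \<omega> (a (fst uv)) - H T \<omega> (a (snd uv))\<bar> / norm (fst uv - snd uv) powr q
      * c \<omega> powr q)) \<in> borel_measurable M"
  proof (rule borel_measurable_SUP_continuous_on)
    show "continuous_on X (\<lambda>uv. \<bar>H T \<omega> (a (fst uv)) - H T \<omega> (a (snd uv))\<bar> / norm (fst uv - snd uv) powr q
      * c \<omega> powr q)" for \<omega>
      using X by (intro continuous_intros continuous_on_compose2[OF H_cont] a_cont) auto
    show "(\<lambda>\<omega>. \<bar>H T \<omega> (a (fst uv)) - H T \<omega> (a (snd uv))\<bar> / norm (fst uv - snd uv) powr q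
      * c \<omega> powr q) \<in> borel_measurable M" if "uv \<in> X" for uv
      using H_meas[OF X(1)[OF that]] H_meas[OF X(2)[OF that]] by measurable
  qed
  then show ?thesis
    by (simp add: hoelder_sup_def X_def c_def a_def)
qed

lemma (in prob_space) prob_tendsto_0_if_covered:
  assumes bounded: "\<And>e. e > 0 \<Longrightarrow> \<exists>Mb>0. eventually (\<lambda>T. prob (A Mb T) < e) F"
    and small: "\<And>Mb. Mb > 0 \<Longrightarrow> ((\<lambda>T. prob (B Mb T)) \<longlongrightarrow> 0) F"
    and cover: "\<And>Mb. Mb > 0 \<Longrightarrow> eventually (\<lambda>T. E T \<subseteq> A Mb T \<union> B Mb T) F"
    and A_sets: "\<And>Mb T. A Mb T \<in> events" and B_sets: "\<And>Mb T. B Mb T \<in> events"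
  shows "((\<lambda>T. prob (E T)) \<longlongrightarrow> 0) F"
proof (rule order_tendstoI)
  show "eventually (\<lambda>T. a < prob (E T)) F" if "a < 0" for a
    using that by (intro always_eventually) (auto intro: less_le_trans[OF _ measure_nonneg])
  fix e :: real
  assume "e > 0"
  then obtain Mb where "Mb > 0" and A: "eventually (\<lambda>T. prob (A Mb T) < e / 2) F"
    using bounded[of "e / 2"] by auto
  have B: "eventually (\<lambda>T. prob (B Mb T) < e / 2) F"
    using order_tendstoD(2)[OF small[OF \<open>Mb > 0\<close>], of "e / 2"] \<open>e > 0\<close> by simp
  show "eventually (\<lambda>T. prob (E T) < e) F"
    using A B cover[OF \<open>Mb > 0\<close>]
  proof eventually_elim
    case (elim T)
    have "prob (E T) \<le> prob (A Mb T \<union> B Mb T)"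
      using elim(3) A_sets B_sets by (intro finite_measure_mono) auto
    also have "\<dots> \<le> prob (A Mb T) + prob (B Mb T)"
      using A_sets B_sets by (rule measure_Un_le)
    finally show ?case
      using elim(1,2) by linarith
  qed
qed

lemma lower_bound_of_tendsto_powr_ratio:
  fixes p :: "real \<Rightarrow> real"
  assumes "\<exists>lam>0. ((\<lambda>x. p x / \<bar>x\<bar> powr q) \<longlongrightarrow> lam) (at 0)"
  obtains \<kappa> \<delta> where "\<kappa> > 0" "\<delta> > 0" "\<And>x. x \<noteq> 0 \<Longrightarrow> \<bar>x\<bar> < \<delta> \<Longrightarrow> \<kappa> * \<bar>x\<bar> powr q < p x"
proof -
  obtain lam where "lam > 0" and lim: "((\<lambda>x. p x / \<bar>x\<bar> powr q) \<longlongrightarrow> lam) (at 0)"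
    using assms by auto
  have "eventually (\<lambda>x. lam / 2 < p x / \<bar>x\<bar> powr q) (at 0)"
    using order_tendstoD(1)[OF lim, of "lam / 2"] \<open>lam > 0\<close> by simp
  then obtain \<delta> where "\<delta> > 0" and \<delta>: "\<And>x. x \<noteq> 0 \<Longrightarrow> dist x 0 < \<delta> \<Longrightarrow> lam / 2 < p x / \<bar>x\<bar> powr q"
    unfolding eventually_at by auto
  have "lam / 2 * \<bar>x\<bar> powr q < p x" if "x \<noteq> 0" "\<bar>x\<bar> < \<delta>" for x
    using \<delta>[of x] that by (simp add: pos_less_divide_eq)
  then show thesis
    using that[of "lam / 2" \<delta>] \<open>lam > 0\<close> \<open>\<delta> > 0\<close> by simp
qed

lemma eventually_along_ge: "eventually (\<lambda>T. T \<in> TT \<and> T0 \<le> T) (along TT)"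
  unfolding along_def eventually_inf_principal
  by (rule eventually_mono[OF eventually_ge_at_top[of T0]]) auto

theorem theorem2:
  fixes M :: "'a measure"
    and \<Theta> :: "(real^'n::finite) set"
    and \<theta>s :: "real^'n"
    and TT :: "real set"
    and H :: "real \<Rightarrow> 'a \<Rightarrow> real^'n \<Rightarrow> real"
    and \<xi> :: "real \<Rightarrow> 'a \<Rightarrow> 'n \<Rightarrow> real"
    and p :: "real \<Rightarrow> real"
    and \<alpha> :: "real \<Rightarrow> 'n \<Rightarrow> real"
    and \<theta>hat :: "real \<Rightarrow> 'a \<Rightarrow> real^'n"
    and q :: real
  assumes P: "prob_space M"
    and \<Theta>: "bounded \<Theta>" "open \<Theta>" "\<theta>s \<in> \<Theta>"
    and TT: "TT \<subseteq> {0..}" "\<forall>x. \<exists>T\<in>TT. x < T"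
    and H_cont: "\<And>T \<omega>. continuous_on (closure \<Theta>) (H T \<omega>)"
    and H_meas: "\<And>T \<theta>. \<theta> \<in> closure \<Theta> \<Longrightarrow> (\<lambda>\<omega>. H T \<omega> \<theta>) \<in> borel_measurable M"
    and \<xi>_pos: "\<And>T \<omega> j. \<xi> T \<omega> j > 0"
    and \<xi>_meas: "\<And>T j. (\<lambda>\<omega>. \<xi> T \<omega> j) \<in> borel_measurable M"
    and p_nonneg: "\<And>x. p x \<ge> 0" and p0: "p 0 = 0"
    and \<theta>hat_meas: "\<And>T. \<theta>hat T \<in> borel_measurable M"
    and \<theta>hat_in: "\<And>T \<omega>. \<theta>hat T \<omega> \<in> closure \<Theta>"
    and \<theta>hat_max: "\<And>T \<omega> \<theta>. \<theta> \<in> closure \<Theta> \<Longrightarrow> Hdag H \<xi> p T \<omega> \<theta> \<le> Hdag H \<xi> p T \<omega> (\<theta>hat T \<omega>)"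
    and \<alpha>_nz: "\<And>T j. \<alpha> T j \<noteq> 0"
    and a_lim: "((\<lambda>T. spec_norm (a_mat \<alpha> T)) \<longlongrightarrow> 0) (along TT)"
    and q: "0 < q" "q \<le> 1"
    and A5: "\<exists>lam>0. ((\<lambda>x. p x / \<bar>x\<bar> powr q) \<longlongrightarrow> lam) (at 0)"
    and A7: "\<And>Mb \<epsilon>. Mb > 0 \<Longrightarrow> \<epsilon> > 0 \<Longrightarrow>
      ((\<lambda>T. measure M {\<omega> \<in> space M.
          (SUP uv \<in> {(u, v). u \<in> U_set \<Theta> \<theta>s \<alpha> T \<and> v \<in> U_set \<Theta> \<theta>s \<alpha> T \<and>
                             norm u < Mb \<and> norm v < Mb \<and> u \<noteq> v}.
             ereal (\<bar>H T \<omega> (\<theta>s + a_mat \<alpha> T *v fst uv) - H T \<omega> (\<theta>s + a_mat \<alpha> T *v snd uv)\<bar>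
                    / norm (fst uv - snd uv) powr q
                    * spec_norm (block00 \<theta>s (G_mat q \<theta>s \<alpha> \<xi> T \<omega>)) powr q))
          > ereal \<epsilon>}) \<longlongrightarrow> 0) (along TT)"
    and Op: "\<forall>\<epsilon>>0. \<exists>T0\<in>TT. \<exists>Mb>0. \<forall>T\<in>TT. T \<ge> T0 \<longrightarrow>
      measure M {\<omega> \<in> space M. norm (matrix_inv (a_mat \<alpha> T) *v (\<theta>hat T \<omega> - \<theta>s)) > Mb} < \<epsilon>"
  shows "((\<lambda>T. measure M {\<omega> \<in> space M. \<forall>j. \<theta>s$j = 0 \<longrightarrow> \<theta>hat T \<omega> $ j = 0}) \<longlongrightarrow> 1) (along TT)"
proof -
  interpret prob_space M
    by (rule P)
  obtain \<kappa> \<delta> where "\<kappa> > 0" "\<delta> > 0"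
    and p_lower: "\<And>x. x \<noteq> 0 \<Longrightarrow> \<bar>x\<bar> < \<delta> \<Longrightarrow> \<kappa> * \<bar>x\<bar> powr q < p x"
    using lower_bound_of_tendsto_powr_ratio[OF A5] by blast
  obtain r where "r > 0" and ball: "ball \<theta>s r \<subseteq> \<Theta>"
    using \<Theta> open_contains_ball by blast
  define \<epsilon> where "\<epsilon> = \<kappa> / real CARD('n) powr q"
  define bad where "bad T = {\<omega> \<in> space M. \<exists>j. \<theta>s$j = 0 \<and> \<theta>hat T \<omega> $ j \<noteq> 0}" for T
  define A where "A Mb T = {\<omega> \<in> space M. norm (matrix_inv (a_mat \<alpha> T) *v (\<theta>hat T \<omega> - \<theta>s)) > Mb}" for Mb T
  define B where "B Mb T = {\<omega> \<in> space M. hoelder_sup \<Theta> \<theta>s \<alpha> \<xi> q H (Mb + 1) T \<omega> > ereal \<epsilon>}" for Mb T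
  note [measurable] = \<theta>hat_meas borel_measurable_norm_matrix_vector_mult_diff[OF \<theta>hat_meas]
    borel_measurable_hoelder_sup[where H = H and \<xi> = \<xi> and \<alpha> = \<alpha>, OF H_cont H_meas \<xi>_meas \<alpha>_nz]
  have "((\<lambda>T. prob (bad T)) \<longlongrightarrow> 0) (along TT)"
  proof (rule prob_tendsto_0_if_covered)
    show "\<exists>Mb>0. eventually (\<lambda>T. prob (A Mb T) < e) (along TT)" if "e > 0" for e
      using Op that eventually_along_ge unfolding A_def by (fast elim: eventually_mono)
    show "((\<lambda>T. prob (B Mb T)) \<longlongrightarrow> 0) (along TT)" if "Mb > 0" for Mb
      using A7[of "Mb + 1" \<epsilon>] that \<open>\<kappa> > 0\<close> unfolding B_def hoelder_sup_def \<epsilon>_def by simp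
    show "eventually (\<lambda>T. bad T \<subseteq> A Mb T \<union> B Mb T) (along TT)" if "Mb > 0" for Mb
      using eventually_nonzero_on_zeros_subset[where H = H and \<xi> = \<xi> and p = p and \<alpha> = \<alpha>,
          OF \<alpha>_nz \<xi>_pos q(1) \<open>\<kappa> > 0\<close> p_nonneg p0 \<open>\<delta> > 0\<close> p_lower \<open>r > 0\<close> ball \<theta>hat_in \<theta>hat_max a_lim that]
      by (auto simp: bad_def A_def B_def \<epsilon>_def elim!: eventually_mono)
  qed (simp_all add: A_def B_def)
  moreover have "{\<omega> \<in> space M. \<forall>j. \<theta>s$j = 0 \<longrightarrow> \<theta>hat T \<omega> $ j = 0} = space M - bad T" for T
    by (auto simp: bad_def)
  moreover have "bad T \<in> events" for T
    unfolding bad_def by measurable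
  ultimately show ?thesis
    using tendsto_diff[OF tendsto_const, of _ 0 _ 1] by (simp add: prob_compl)
qed

end
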